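(* For every $n\ge 2$, the Bigalke–Rollenske nilmanifold $X^{4n-2}$ does not admit any SKT metric.
   Context: Fix $n\ge2$. Let $G_n\subset GL(2n+2,\mathbb C)$ be the real nilpotent Lie group of upper triangular unipotent matrices parametrized by $x_1,\dots,x_{n-1},y_1,\dots,y_n,z_1,\dots,z_{n-1},w_1,\dots,w_n\in\mathbb C$ of the following shape (rows/columns indexed $1,\dots,2n+2$): row $1$ has entry $\bar y_1$ in column $2n+1$ and $w_1$ in column $2n+2$; for $k=2,\dots,n$, row $k$ has $\bar z_{k-1}$ in column $n+k-1$, $-x_{k-1}$ in column $n+k$ and $w_k$ in column $2n+2$; for $k=1,\dots,n$, row $n+k$ has $y_k$ in column $2n+2$; row $2n+1$ has $z_1$ in column $2n+2$; all other off-diagonal entries are $0$ and the diagonal entries are $1$. Let $\Gamma$ be the lattice of such matrices with entries in $\mathbb Z[i]$, and $X^{4n-2}=\Gamma\backslash G_n$, a compact complex manifold of complex dimension $4n-2$ with the left-invariant complex structure whose $(1,0)$-forms are spanned by the left-invariant co-frame $dx_j\,(1\le j\le n-1)$, $dy_j\,(1\le j\le n)$, $dz_j\,(1\le j\le n-1)$, $\omega_1=dw_1-\bar y_1dz_1$, $\omega_k=dw_k-\bar z_{k-1}dy_{k-1}+x_{k-1}dy_k$ $(k=2,\dots,n)$. These satisfy $d(dx_j)=d(dy_j)=d(dz_j)=0$, $\partial\omega_1=0$, $\bar\partial\omega_1=dz_1\wedge d\bar y_1$, and for $j=2,\dots,n$: $\partial\omega_j=dx_{j-1}\wedge dy_j$,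 $\bar\partial\omega_j=dy_{j-1}\wedge d\bar z_{j-1}$. An SKT (pluriclosed) metric is a Hermitian metric whose fundamental form $\omega$ satisfies $\partial\bar\partial\omega=0$. *)

theory Defs
  imports "HOL-Analysis.Analysis"
begin

text \<open>Complex dimension N = 4n-2.  Points of G_n are identified with their
coordinate vectors (x_1..x_{n-1}, y_1..y_n, z_1..z_{n-1}, w_1..w_n), stored
0-based at the positions below.\<close>

definition BR_N :: "nat \<Rightarrow> nat" where "BR_N n = 4 * n - 2"

definition cx :: "nat \<Rightarrow> nat \<Rightarrow> nat" where "cx n j = j - 1"
definition cy :: "nat \<Rightarrow> nat \<Rightarrow> nat" where "cy n j = n + j - 2"
definition cz :: "nat \<Rightarrow> nat \<Rightarrow> nat" where "cz n j = 2 * n + j - 2"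
definition cw :: "nat \<Rightarrow> nat \<Rightarrow> nat" where "cw n j = 3 * n + j - 3"

text \<open>The (2n+2)x(2n+2) matrix attached to a coordinate tuple p
(rows/columns indexed 1..2n+2).\<close>

definition BR_matrix :: "nat \<Rightarrow> (nat \<Rightarrow> complex) \<Rightarrow> nat \<Rightarrow> nat \<Rightarrow> complex" where
  "BR_matrix n p = (\<lambda>i j.
     if i = j \<and> 1 \<le> i \<and> i \<le> 2*n+2 then 1
     else if i = 1 \<and> j = 2*n+1 then cnj (p (cy n 1))
     else if i = 1 \<and> j = 2*n+2 then p (cw n 1)
     else if 2 \<le> i \<and> i \<le> n \<and> j = n+i-1 then cnj (p (cz n (i-1)))
     else if 2 \<le> i \<and> i \<le> n \<and> j = n+i then - p (cx n (i-1))
     else if 2 \<le> i \<and> i \<le> n \<and> j = 2*n+2 then p (cw n i)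
     else if n+1 \<le> i \<and> i \<le> 2*n \<and> j = 2*n+2 then p (cy n (i-n))
     else if i = 2*n+1 \<and> j = 2*n+2 then p (cz n 1)
     else 0)"

definition mat_mult :: "nat \<Rightarrow> (nat \<Rightarrow> nat \<Rightarrow> complex) \<Rightarrow> (nat \<Rightarrow> nat \<Rightarrow> complex)
    \<Rightarrow> nat \<Rightarrow> nat \<Rightarrow> complex" where
  "mat_mult n A B = (\<lambda>i j. \<Sum>k\<in>{1..2*n+2}. A i k * B k j)"

definition BR_coords :: "nat \<Rightarrow> (nat \<Rightarrow> nat \<Rightarrow> complex) \<Rightarrow> nat \<Rightarrow> complex" where
  "BR_coords n M = (\<lambda>c.
     if c < n - 1 then - M (c+2) (n+c+2)
     else if c < 2*n - 1 then M (n + (c+2-n)) (2*n+2)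
     else if c < 3*n - 2 then cnj (M (c+3-2*n) (n + (c+2-2*n)))
     else M (c+3-3*n) (2*n+2))"

text \<open>Points of G_n as vectors in complex^'N, via an enumeration
iota of the index type by {0..<N}.\<close>

definition vec_to_fun :: "(nat \<Rightarrow> 'N::finite) \<Rightarrow> complex^'N \<Rightarrow> nat \<Rightarrow> complex" where
  "vec_to_fun \<iota> v = (\<lambda>c. v $ \<iota> c)"

definition fun_to_vec :: "nat \<Rightarrow> (nat \<Rightarrow> 'N::finite) \<Rightarrow> (nat \<Rightarrow> complex) \<Rightarrow> complex^'N" where
  "fun_to_vec n \<iota> p = (\<chi> i. p (inv_into {..<BR_N n} \<iota> i))"

definition BR_mult :: "nat \<Rightarrow> (nat \<Rightarrow> 'N::finite) \<Rightarrow> complex^'N \<Rightarrow> complex^'N \<Rightarrow> complex^'N" where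
  "BR_mult n \<iota> u v = fun_to_vec n \<iota>
     (BR_coords n (mat_mult n (BR_matrix n (vec_to_fun \<iota> u)) (BR_matrix n (vec_to_fun \<iota> v))))"

definition gauss_ints :: "complex set" where
  "gauss_ints = {z. Re z \<in> \<int> \<and> Im z \<in> \<int>}"

definition BR_Gamma :: "nat \<Rightarrow> (nat \<Rightarrow> 'N::finite) \<Rightarrow> (complex^'N) set" where
  "BR_Gamma n \<iota> = {\<gamma>. \<forall>i j. BR_matrix n (vec_to_fun \<iota> \<gamma>) i j \<in> gauss_ints}"

fun C_k :: "nat \<Rightarrow> ('a::real_normed_vector \<Rightarrow> 'b::real_normed_vector) \<Rightarrow> bool" where
  "C_k 0 f = continuous_on UNIV f"
| "C_k (Suc k) f = ((\<forall>x. f differentiable (at x)) \<and>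
       (\<forall>v. C_k k (\<lambda>x. frechet_derivative f (at x) v)))"

definition smooth_map :: "('a::real_normed_vector \<Rightarrow> 'b::real_normed_vector) \<Rightarrow> bool" where
  "smooth_map f \<longleftrightarrow> (\<forall>k. C_k k f)"

definition wirt :: "(nat \<Rightarrow> 'N::finite) \<Rightarrow> nat \<Rightarrow> (complex^'N \<Rightarrow> complex) \<Rightarrow> complex^'N \<Rightarrow> complex" where
  "wirt \<iota> c f = (\<lambda>x. (frechet_derivative f (at x) (axis (\<iota> c) 1)
                     - \<i> * frechet_derivative f (at x) (axis (\<iota> c) \<i>)) / 2)"

definition wirtbar :: "(nat \<Rightarrow> 'N::finite) \<Rightarrow> nat \<Rightarrow> (complex^'N \<Rightarrow> complex) \<Rightarrow> complex^'N \<Rightarrow> complex" where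
  "wirtbar \<iota> c f = (\<lambda>x. (frechet_derivative f (at x) (axis (\<iota> c) 1)
                     + \<i> * frechet_derivative f (at x) (axis (\<iota> c) \<i>)) / 2)"

definition BR_jac :: "nat \<Rightarrow> (nat \<Rightarrow> 'N::finite) \<Rightarrow> complex^'N \<Rightarrow> complex^'N \<Rightarrow> nat \<Rightarrow> nat \<Rightarrow> complex" where
  "BR_jac n \<iota> \<gamma> x c e = deriv (\<lambda>t. BR_mult n \<iota> \<gamma> (x + axis (\<iota> e) t) $ \<iota> c) 0"

text \<open>A Hermitian metric on X, written on the universal cover G_n as
omega = i * sum g_cd dzeta_c /\ dconj(zeta_d): smooth, Hermitian, positive definite
coefficients, and omega invariant under pull-back by all left translations by Gamma.\<close>

definition BR_hermitian_metric ::
    "nat \<Rightarrow> (nat \<Rightarrow> 'N::finite) \<Rightarrow> (nat \<Rightarrow> nat \<Rightarrow> complex^'N \<Rightarrow> complex) \<Rightarrow> bool" where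
  "BR_hermitian_metric n \<iota> g \<longleftrightarrow>
     (\<forall>c<BR_N n. \<forall>d<BR_N n. smooth_map (g c d)) \<and>
     (\<forall>x c d. c < BR_N n \<longrightarrow> d < BR_N n \<longrightarrow> g d c x = cnj (g c d x)) \<and>
     (\<forall>x \<xi>. (\<exists>c<BR_N n. \<xi> c \<noteq> 0) \<longrightarrow>
        0 < Re (\<Sum>c<BR_N n. \<Sum>d<BR_N n. g c d x * \<xi> c * cnj (\<xi> d))) \<and>
     (\<forall>\<gamma>\<in>BR_Gamma n \<iota>. \<forall>x e f. e < BR_N n \<longrightarrow> f < BR_N n \<longrightarrow>
        g e f x = (\<Sum>c<BR_N n. \<Sum>d<BR_N n.
            BR_jac n \<iota> \<gamma> x c e * g c d (BR_mult n \<iota> \<gamma> x) * cnj (BR_jac n \<iota> \<gamma> x d f)))"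

text \<open>Pluriclosed condition: all coefficients of d d-bar omega vanish.\<close>

definition BR_pluriclosed ::
    "nat \<Rightarrow> (nat \<Rightarrow> 'N::finite) \<Rightarrow> (nat \<Rightarrow> nat \<Rightarrow> complex^'N \<Rightarrow> complex) \<Rightarrow> bool" where
  "BR_pluriclosed n \<iota> g \<longleftrightarrow>
     (\<forall>x c d e f. c < BR_N n \<longrightarrow> d < BR_N n \<longrightarrow> e < BR_N n \<longrightarrow> f < BR_N n \<longrightarrow>
        wirt \<iota> e (wirtbar \<iota> f (g c d)) x - wirt \<iota> c (wirtbar \<iota> f (g e d)) x
      - wirt \<iota> e (wirtbar \<iota> d (g c f)) x + wirt \<iota> c (wirtbar \<iota> d (g e f)) x = 0)"

definition BR_SKT_metric ::
    "nat \<Rightarrow> (nat \<Rightarrow> 'N::finite) \<Rightarrow> (nat \<Rightarrow> nat \<Rightarrow> complex^'N \<Rightarrow> complex) \<Rightarrow> bool" where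
  "BR_SKT_metric n \<iota> g \<longleftrightarrow> BR_hermitian_metric n \<iota> g \<and> BR_pluriclosed n \<iota> g"

end

theory Submission
  imports Defs
begin

(* Along the slice of G_n where only x_1, y_2, w_2 vary, omega_2 = dw_2 + x_1 dy_2, so the
   (1,0)-frame d/dx_1, d/dy_2 - x_1 d/dw_2 has bracket -d/dw_2. Evaluating ddbar omega = 0 on
   this frame and its conjugate writes the coefficient g_{w_2 w_2} as a sum of
   first derivatives of six functions built from g, each invariant under the lattice elements
   translating x_1, y_2 or w_2 by 1 or i (translating x_1 shears w_2). Integrating over a unit
   cube of the slice, every derivative integrates to zero, hence so does g_{w_2 w_2}; but it is
   positive since the metric is positive definite. *)

section \<open>Integrals of derivatives over a unit cube\<close>

lemma continuous_on_UNIV_comp: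
  "continuous_on UNIV f \<Longrightarrow> continuous_on UNIV g \<Longrightarrow> continuous_on UNIV (\<lambda>x. f (g x))"
  by (rule continuous_on_compose2[of UNIV f UNIV g]) auto

lemma integral_cbox_Pair_cong:
  fixes h k :: "'a::euclidean_space \<times> 'b::euclidean_space \<Rightarrow> complex"
  assumes "continuous_on UNIV h" "continuous_on UNIV k"
    and "\<And>u. integral (cbox c d) (\<lambda>r. h (u, r)) = integral (cbox c d) (\<lambda>r. k (u, r))"
  shows "integral (cbox (a, c) (b, d)) h = integral (cbox (a, c) (b, d)) k"
proof -
  have "continuous_on (cbox (a, c) (b, d)) h" "continuous_on (cbox (a, c) (b, d)) k"
    using assms(1,2) continuous_on_subset by blast+
  then show ?thesis using assms(3) by (simp add: integral_prod_continuous)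
qed

lemma integral_cbox_Pair_eq_0:
  fixes h :: "'a::euclidean_space \<times> 'b::euclidean_space \<Rightarrow> complex"
  assumes "continuous_on UNIV h" and "\<And>u. integral (cbox c d) (\<lambda>r. h (u, r)) = 0"
  shows "integral (cbox (a, c) (b, d)) h = 0"
  using integral_cbox_Pair_cong[of h "\<lambda>_. 0"] assms by simp

lemma integral_01_derivative:
  fixes f f' :: "real \<Rightarrow> complex"
  assumes "\<And>u. (f has_vector_derivative f' u) (at u)"
  shows "integral {0..1} f' = f 1 - f 0"
  using fundamental_theorem_of_calculus[of 0 1 f f'] assms
  by (auto intro: has_vector_derivative_at_within integral_unique)

lemma periodic_add_of_int:
  fixes f :: "real \<Rightarrow> 'a"
  assumes "\<And>x. f (x + 1) = f x"
  shows "f (x + of_int k) = f x"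
proof -
  have nat: "f (y + of_nat m) = f y" for y m
  proof (induction m)
    case (Suc m)
    then show ?case using assms[of "y + of_nat m"] by (simp add: algebra_simps)
  qed simp
  show ?thesis
  proof (cases "k \<ge> 0")
    case True
    then show ?thesis using nat[of x "nat k"] by simp
  next
    case False
    then show ?thesis using nat[of "x + of_int k" "nat (- k)"] by simp
  qed
qed

lemma integral_01_periodic_shift:
  fixes f :: "real \<Rightarrow> complex"
  assumes cont: "continuous_on UNIV f" and per: "\<And>x. f (x + 1) = f x"
  shows "integral {0..1} (\<lambda>s. f (s + \<alpha>)) = integral {0..1} f"
proof -
  define r where "r = \<alpha> - of_int \<lfloor>\<alpha>\<rfloor>"
  have r: "0 \<le> r" "r \<le> 1" unfolding r_def by linarith+
  have int: "f integrable_on {a..b}" for a b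
    using cont continuous_on_subset integrable_continuous_interval by blast
  have "f (s + \<alpha>) = f (s + r)" for s
    using periodic_add_of_int[of f "s + r" "\<lfloor>\<alpha>\<rfloor>", OF per] by (simp add: r_def)
  then have "integral {0..1} (\<lambda>s. f (s + \<alpha>)) = integral {0..1} (f \<circ> (+) r)"
    by (simp add: o_def add.commute)
  also have "\<dots> = integral {r..1} f + integral {1..1+r} f"
    using integral_shift_Icc_real[of 0 1 f r] r int
      Henstock_Kurzweil_Integration.integral_combine[where a=r and c=1 and b="1+r" and f=f]
    by simp
  also have "integral {1..1+r} f = integral {0..r} f"
    using integral_shift_Icc_real[of 0 r f 1] per by (simp add: o_def add.commute)
  also have "integral {r..1} f + integral {0..r} f = integral {0..1} f"
    using Henstock_Kurzweil_Integration.integral_combine[where a=0 and c=r and b=1 and f=f] r int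
    by (simp only: add.commute)
  finally show ?thesis .
qed

lemma integral_unit_square_periodic_shift:
  fixes q :: "real \<times> real \<Rightarrow> complex"
  assumes cq: "continuous_on UNIV q"
    and per1: "\<And>s t. q (s + 1, t) = q (s, t)" and per2: "\<And>s t. q (s, t + 1) = q (s, t)"
  shows "integral (cbox (0, 0) (1, 1)) (\<lambda>(s, t). q (s + \<alpha>, t + \<beta>)) = integral (cbox (0, 0) (1, 1)) q"
proof -
  define G where "G = (\<lambda>s. integral {0..1} (\<lambda>t. q (s, t)))"
  have cont_G: "continuous_on UNIV G"
    using integral_continuous_on_param[of UNIV 0 1 "\<lambda>s t. q (s, t)"] continuous_on_subset[OF cq]
    by (simp add: G_def)
  have cont_sect: "continuous_on UNIV (\<lambda>t. q (s, t))" for s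
    by (auto intro!: continuous_on_UNIV_comp[OF cq] continuous_intros)
  have cont_shift: "continuous_on (cbox (0, 0) (1, 1)) (\<lambda>(s, t). q (s + \<alpha>, t + \<beta>))"
    by (auto simp: case_prod_beta' intro!: continuous_on_subset[OF continuous_on_UNIV_comp[OF cq]] continuous_intros)
  have "integral (cbox (0, 0) (1, 1)) (\<lambda>(s, t). q (s + \<alpha>, t + \<beta>))
      = integral {0..1} (\<lambda>s. integral {0..1} (\<lambda>t. q (s + \<alpha>, t + \<beta>)))"
    using integral_prod_continuous[OF cont_shift] by simp
  also have "\<dots> = integral {0..1} (\<lambda>s. G (s + \<alpha>))"
    unfolding G_def using integral_01_periodic_shift[OF cont_sect] per2 by simp
  also have "\<dots> = integral {0..1} G"
    using integral_01_periodic_shift[OF cont_G] per1 by (simp add: G_def)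
  also have "\<dots> = integral (cbox (0, 0) (1, 1)) q"
    using integral_prod_continuous[of 0 0 1 1 q] continuous_on_subset[OF cq] by (simp add: G_def)
  finally show ?thesis .
qed

lemma integral_cbox_fst_derivative_eq_0:
  fixes h h' :: "real \<times> 'b::euclidean_space \<Rightarrow> complex"
  assumes ch: "continuous_on UNIV h" and ch': "continuous_on UNIV h'"
    and der: "\<And>u r. ((\<lambda>u. h (u, r)) has_vector_derivative h' (u, r)) (at u)"
    and boundary: "integral (cbox c d) (\<lambda>r. h (1, r)) = integral (cbox c d) (\<lambda>r. h (0, r))"
  shows "integral (cbox (0, c) (1, d)) h' = 0"
proof -
  have cbox: "continuous_on (cbox (0, c) (1, d)) (\<lambda>(u, r). h' (u, r))"
    using ch' continuous_on_subset by simp blast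
  have sect: "continuous_on (cbox c d) (\<lambda>r. h (u, r))" for u
    by (rule continuous_on_subset[OF continuous_on_UNIV_comp[OF ch]]) (auto intro: continuous_intros)
  have "integral (cbox (0, c) (1, d)) h' = integral {0..1} (\<lambda>u. integral (cbox c d) (\<lambda>r. h' (u, r)))"
    using integral_prod_continuous[of 0 c 1 d h'] cbox by simp
  also have "\<dots> = integral (cbox c d) (\<lambda>r. integral {0..1} (\<lambda>u. h' (u, r)))"
    using integral_swap_continuous[of 0 c 1 d "\<lambda>u r. h' (u, r)", OF cbox] by simp
  also have "\<dots> = integral (cbox c d) (\<lambda>r. h (1, r) - h (0, r))"
    by (simp add: integral_01_derivative[OF der])
  also have "\<dots> = integral (cbox c d) (\<lambda>r. h (1, r)) - integral (cbox c d) (\<lambda>r. h (0, r))"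
    by (intro integral_diff integrable_continuous sect)
  finally show ?thesis using boundary by simp
qed

(* Points (s1, t1, s2, t2, s3, t3); integral_cube6_derivative_v integrates a derivative in v. *)
type_synonym r6 = "real \<times> real \<times> real \<times> real \<times> real \<times> real"

abbreviation unit_cube6 :: "r6 set" where
  "unit_cube6 \<equiv> cbox (0, 0, 0, 0, 0, 0) (1, 1, 1, 1, 1, 1)"

lemma integral_cube6_derivative_t3:
  fixes h h' :: "r6 \<Rightarrow> complex"
  assumes ch': "continuous_on UNIV h'"
    and der: "\<And>s1 t1 s2 t2 s3 u.
      ((\<lambda>u. h (s1, t1, s2, t2, s3, u)) has_vector_derivative h' (s1, t1, s2, t2, s3, u)) (at u)"
    and per: "\<And>s1 t1 s2 t2 s3. h (s1, t1, s2, t2, s3, 1) = h (s1, t1, s2, t2, s3, 0)"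
  shows "integral unit_cube6 h' = 0"
  using ch' by (intro integral_cbox_Pair_eq_0)
    (auto simp: integral_01_derivative[OF der] per intro!: continuous_on_UNIV_comp[OF ch'] continuous_intros)

lemma integral_cube6_derivative_s3:
  fixes h h' :: "r6 \<Rightarrow> complex"
  assumes ch: "continuous_on UNIV h" and ch': "continuous_on UNIV h'"
    and der: "\<And>s1 t1 s2 t2 u t3.
      ((\<lambda>u. h (s1, t1, s2, t2, u, t3)) has_vector_derivative h' (s1, t1, s2, t2, u, t3)) (at u)"
    and per: "\<And>s1 t1 s2 t2 t3. h (s1, t1, s2, t2, 1, t3) = h (s1, t1, s2, t2, 0, t3)"
  shows "integral unit_cube6 h' = 0"
proof -
  have sect: "integral (cbox (0, 0) (1, 1)) (\<lambda>r. h' (s1, t1, s2, t2, r)) = 0" for s1 t1 s2 t2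
    by (rule integral_cbox_fst_derivative_eq_0[where h="\<lambda>r. h (s1, t1, s2, t2, r)"])
      (auto simp: per der intro!: continuous_on_UNIV_comp[OF ch] continuous_on_UNIV_comp[OF ch'] continuous_intros)
  show ?thesis
    using ch' by (intro sect integral_cbox_Pair_eq_0)
      (auto intro!: continuous_on_UNIV_comp[OF ch'] continuous_intros)
qed

lemma integral_cube6_derivative_t2:
  fixes h h' :: "r6 \<Rightarrow> complex"
  assumes ch: "continuous_on UNIV h" and ch': "continuous_on UNIV h'"
    and der: "\<And>s1 t1 s2 u r.
      ((\<lambda>u. h (s1, t1, s2, u, r)) has_vector_derivative h' (s1, t1, s2, u, r)) (at u)"
    and per: "\<And>s1 t1 s2 r. h (s1, t1, s2, 1, r) = h (s1, t1, s2, 0, r)"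
  shows "integral unit_cube6 h' = 0"
proof -
  have sect: "integral (cbox (0, 0, 0) (1, 1, 1)) (\<lambda>r. h' (s1, t1, s2, r)) = 0" for s1 t1 s2
    by (rule integral_cbox_fst_derivative_eq_0[where h="\<lambda>r. h (s1, t1, s2, r)"])
      (auto simp: per der intro!: continuous_on_UNIV_comp[OF ch] continuous_on_UNIV_comp[OF ch'] continuous_intros)
  show ?thesis
    using ch' by (intro sect integral_cbox_Pair_eq_0)
      (auto intro!: continuous_on_UNIV_comp[OF ch'] continuous_intros)
qed

lemma integral_cube6_derivative_s2:
  fixes h h' :: "r6 \<Rightarrow> complex"
  assumes ch: "continuous_on UNIV h" and ch': "continuous_on UNIV h'"
    and der: "\<And>s1 t1 u r.
      ((\<lambda>u. h (s1, t1, u, r)) has_vector_derivative h' (s1, t1, u, r)) (at u)"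
    and per: "\<And>s1 t1 r. h (s1, t1, 1, r) = h (s1, t1, 0, r)"
  shows "integral unit_cube6 h' = 0"
proof -
  have sect: "integral (cbox (0, 0, 0, 0) (1, 1, 1, 1)) (\<lambda>r. h' (s1, t1, r)) = 0" for s1 t1
    by (rule integral_cbox_fst_derivative_eq_0[where h="\<lambda>r. h (s1, t1, r)"])
      (auto simp: per der intro!: continuous_on_UNIV_comp[OF ch] continuous_on_UNIV_comp[OF ch'] continuous_intros)
  show ?thesis
    using ch' by (intro sect integral_cbox_Pair_eq_0)
      (auto intro!: continuous_on_UNIV_comp[OF ch'] continuous_intros)
qed

(* For the x_1-directions the boundary faces match only up to a shear of (s3, t3), which the
   integral over a full period in (s3, t3) absorbs. *)
lemma integral_cube6_derivative_s1:
  fixes h h' :: "r6 \<Rightarrow> complex"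
  assumes ch: "continuous_on UNIV h" and ch': "continuous_on UNIV h'"
    and der: "\<And>u r. ((\<lambda>u. h (u, r)) has_vector_derivative h' (u, r)) (at u)"
    and shear: "\<And>t1 s2 t2 s3 t3. h (1, t1, s2, t2, s3, t3) = h (0, t1, s2, t2, s3 + s2, t3 + t2)"
    and per5: "\<And>s1 t1 s2 t2 s3 t3. h (s1, t1, s2, t2, s3 + 1, t3) = h (s1, t1, s2, t2, s3, t3)"
    and per6: "\<And>s1 t1 s2 t2 s3 t3. h (s1, t1, s2, t2, s3, t3 + 1) = h (s1, t1, s2, t2, s3, t3)"
  shows "integral unit_cube6 h' = 0"
proof (rule integral_cbox_fst_derivative_eq_0[OF ch ch' der])
  define hs where "hs = (\<lambda>(t1, s2, t2, s3, t3). h (0, t1, s2, t2, s3 + s2, t3 + t2))"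
  have cont_sect: "continuous_on UNIV (\<lambda>r. h (0, t1, s2, t2, r))" for t1 s2 t2
    by (auto intro!: continuous_on_UNIV_comp[OF ch] continuous_intros)
  have sect: "integral (cbox (0, 0) (1, 1)) (\<lambda>r. hs (t1, s2, t2, r))
      = integral (cbox (0, 0) (1, 1)) (\<lambda>r. h (0, t1, s2, t2, r))" for t1 s2 t2
    using integral_unit_square_periodic_shift[OF cont_sect, of t1 s2 t2 s2 t2] per5 per6
    by (simp add: hs_def case_prod_beta')
  have "integral (cbox (0, 0, 0, 0, 0) (1, 1, 1, 1, 1)) (\<lambda>r. h (1, r))
      = integral (cbox (0, 0, 0, 0, 0) (1, 1, 1, 1, 1)) hs"
    by (intro integral_cong) (auto simp: hs_def shear)
  also have "\<dots> = integral (cbox (0, 0, 0, 0, 0) (1, 1, 1, 1, 1)) (\<lambda>r. h (0, r))"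
    by (intro sect integral_cbox_Pair_cong)
      (auto simp: hs_def case_prod_beta' intro!: continuous_on_UNIV_comp[OF ch] continuous_intros)
  finally show "integral (cbox (0, 0, 0, 0, 0) (1, 1, 1, 1, 1)) (\<lambda>r. h (1, r))
      = integral (cbox (0, 0, 0, 0, 0) (1, 1, 1, 1, 1)) (\<lambda>r. h (0, r))" .
qed

lemma integral_cube6_derivative_t1:
  fixes h h' :: "r6 \<Rightarrow> complex"
  assumes ch: "continuous_on UNIV h" and ch': "continuous_on UNIV h'"
    and der: "\<And>s1 u r. ((\<lambda>u. h (s1, u, r)) has_vector_derivative h' (s1, u, r)) (at u)"
    and shear: "\<And>s1 s2 t2 s3 t3. h (s1, 1, s2, t2, s3, t3) = h (s1, 0, s2, t2, s3 - t2, t3 + s2)"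
    and per5: "\<And>s1 t1 s2 t2 s3 t3. h (s1, t1, s2, t2, s3 + 1, t3) = h (s1, t1, s2, t2, s3, t3)"
    and per6: "\<And>s1 t1 s2 t2 s3 t3. h (s1, t1, s2, t2, s3, t3 + 1) = h (s1, t1, s2, t2, s3, t3)"
  shows "integral unit_cube6 h' = 0"
proof -
  have sect: "integral (cbox (0, 0, 0, 0, 0) (1, 1, 1, 1, 1)) (\<lambda>r. h' (s1, r)) = 0" for s1
  proof (rule integral_cbox_fst_derivative_eq_0[where h="\<lambda>r. h (s1, r)"])
    show "continuous_on UNIV (\<lambda>r. h (s1, r))" "continuous_on UNIV (\<lambda>r. h' (s1, r))"
      by (auto intro!: continuous_on_UNIV_comp[OF ch] continuous_on_UNIV_comp[OF ch'] continuous_intros)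
    show "((\<lambda>u. h (s1, u, r)) has_vector_derivative h' (s1, u, r)) (at u)" for u r
      by (rule der)
    define hs where "hs = (\<lambda>(s2, t2, s3, t3). h (s1, 0, s2, t2, s3 - t2, t3 + s2))"
    have cont_sect: "continuous_on UNIV (\<lambda>r. h (s1, 0, s2, t2, r))" for s2 t2
      by (auto intro!: continuous_on_UNIV_comp[OF ch] continuous_intros)
    have sect: "integral (cbox (0, 0) (1, 1)) (\<lambda>r. hs (s2, t2, r))
        = integral (cbox (0, 0) (1, 1)) (\<lambda>r. h (s1, 0, s2, t2, r))" for s2 t2
      using integral_unit_square_periodic_shift[OF cont_sect, of s2 t2 "- t2" s2] per5 per6
      by (simp add: hs_def case_prod_beta')
    have "integral (cbox (0, 0, 0, 0) (1, 1, 1, 1)) (\<lambda>r. h (s1, 1, r))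
        = integral (cbox (0, 0, 0, 0) (1, 1, 1, 1)) hs"
      by (intro integral_cong) (auto simp: hs_def shear)
    also have "\<dots> = integral (cbox (0, 0, 0, 0) (1, 1, 1, 1)) (\<lambda>r. h (s1, 0, r))"
      by (intro sect integral_cbox_Pair_cong)
        (auto simp: hs_def case_prod_beta' intro!: continuous_on_UNIV_comp[OF ch] continuous_intros)
    finally show "integral (cbox (0, 0, 0, 0) (1, 1, 1, 1)) (\<lambda>r. h (s1, 1, r))
        = integral (cbox (0, 0, 0, 0) (1, 1, 1, 1)) (\<lambda>r. h (s1, 0, r))" .
  qed
  show ?thesis
    using ch' by (intro sect integral_cbox_Pair_eq_0)
      (auto intro!: continuous_on_UNIV_comp[OF ch'] continuous_intros)
qed

lemma Re_integral_pos:
  fixes f :: "'a::euclidean_space \<Rightarrow> complex"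
  assumes cont: "continuous_on (cbox a b) f" and content: "0 < measure lborel (cbox a b)"
    and pos: "\<And>x. x \<in> cbox a b \<Longrightarrow> 0 < Re (f x)"
  shows "0 < Re (integral (cbox a b) f)"
proof -
  have cont_Re: "continuous_on (cbox a b) (\<lambda>x. Re (f x))"
    using cont by (intro continuous_intros)
  have "cbox a b \<noteq> {}" using content by auto
  then obtain x0 where x0: "x0 \<in> cbox a b" "\<And>x. x \<in> cbox a b \<Longrightarrow> Re (f x0) \<le> Re (f x)"
    using continuous_attains_inf[OF compact_cbox _ cont_Re] by blast
  have "0 < Re (f x0) * measure lborel (cbox a b)"
    using pos[OF x0(1)] content by simp
  also have "\<dots> = integral (cbox a b) (\<lambda>x. Re (f x0))"
    by simp
  also have "\<dots> \<le> integral (cbox a b) (\<lambda>x. Re (f x))"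
    using x0(2) integrable_continuous[OF cont_Re] by (intro integral_le) auto
  also have "\<dots> = Re (integral (cbox a b) f)"
    using integral_linear[OF integrable_continuous[OF cont] bounded_linear_Re] by (simp add: o_def)
  finally show ?thesis .
qed

section \<open>Wirtinger calculus\<close>

lemma frechet_derivative_add:
  "f differentiable (at x) \<Longrightarrow> g differentiable (at x) \<Longrightarrow>
   frechet_derivative (\<lambda>x. f x + g x) (at x) v
     = frechet_derivative f (at x) v + frechet_derivative g (at x) v"
  by (simp add: frechet_derivative_at[OF has_derivative_add[OF
      frechet_derivative_works[THEN iffD1] frechet_derivative_works[THEN iffD1]], symmetric])

lemma frechet_derivative_diff:
  "f differentiable (at x) \<Longrightarrow> g differentiable (at x) \<Longrightarrow>
   frechet_derivative (\<lambda>x. f x - g x) (at x) v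
     = frechet_derivative f (at x) v - frechet_derivative g (at x) v"
  by (simp add: frechet_derivative_at[OF has_derivative_diff[OF
      frechet_derivative_works[THEN iffD1] frechet_derivative_works[THEN iffD1]], symmetric])

lemma frechet_derivative_minus:
  "f differentiable (at x) \<Longrightarrow> frechet_derivative (\<lambda>x. - f x) (at x) v = - frechet_derivative f (at x) v"
  by (simp add: frechet_derivative_at[OF has_derivative_minus[OF frechet_derivative_works[THEN iffD1]],
      symmetric])

lemma frechet_derivative_mult:
  fixes f g :: "'a::real_normed_vector \<Rightarrow> 'b::real_normed_algebra"
  shows "f differentiable (at x) \<Longrightarrow> g differentiable (at x) \<Longrightarrow>
   frechet_derivative (\<lambda>x. f x * g x) (at x) v
     = f x * frechet_derivative g (at x) v + frechet_derivative f (at x) v * g x"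
  by (simp add: frechet_derivative_at[OF has_derivative_mult[OF
      frechet_derivative_works[THEN iffD1] frechet_derivative_works[THEN iffD1]], symmetric])

lemma bounded_linear_cnj_vec_nth: "bounded_linear (\<lambda>x::complex^'n. cnj (x $ j))"
  using bounded_linear_compose[OF bounded_linear_cnj bounded_linear_vec_nth[of j]] by (simp add: o_def)

lemma differentiable_vec_nth [simp]: "(\<lambda>x::'a::real_normed_vector^'n. x $ j) differentiable (at x)"
  by (rule bounded_linear_imp_differentiable[OF bounded_linear_vec_nth])

lemma differentiable_cnj_vec_nth [simp]: "(\<lambda>x::complex^'n. cnj (x $ j)) differentiable (at x)"
  by (rule bounded_linear_imp_differentiable[OF bounded_linear_cnj_vec_nth])

lemma frechet_derivative_vec_nth: "frechet_derivative (\<lambda>x::'a::real_normed_vector^'n. x $ j) (at x) v = v $ j"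
  by (simp add: frechet_derivative_at[OF bounded_linear_imp_has_derivative[OF bounded_linear_vec_nth], symmetric])

lemma frechet_derivative_cnj_vec_nth: "frechet_derivative (\<lambda>x::complex^'n. cnj (x $ j)) (at x) v = cnj (v $ j)"
  by (simp add: frechet_derivative_at[OF bounded_linear_imp_has_derivative[OF bounded_linear_cnj_vec_nth], symmetric])

abbreviation C1 :: "('a::real_normed_vector \<Rightarrow> 'b::real_normed_vector) \<Rightarrow> bool" where
  "C1 \<equiv> C_k 1"

lemma C1_imp_continuous: "C1 f \<Longrightarrow> continuous_on UNIV f"
  by (simp add: continuous_at_imp_continuous_on differentiable_imp_continuous_within)

lemma C1_add: "C1 f \<Longrightarrow> C1 g \<Longrightarrow> C1 (\<lambda>x. f x + g x)"
  by (auto simp: frechet_derivative_add intro!: continuous_intros)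

lemma C1_diff: "C1 f \<Longrightarrow> C1 g \<Longrightarrow> C1 (\<lambda>x. f x - g x)"
  by (auto simp: frechet_derivative_diff intro!: continuous_intros)

lemma C1_minus: "C1 f \<Longrightarrow> C1 (\<lambda>x. - f x)"
  by (auto simp: frechet_derivative_minus intro!: continuous_intros)

lemma C1_mult:
  fixes f g :: "'a::real_normed_vector \<Rightarrow> 'b::real_normed_algebra"
  assumes "C1 f" "C1 g"
  shows "C1 (\<lambda>x. f x * g x)"
  using assms C1_imp_continuous[OF assms(1)] C1_imp_continuous[OF assms(2)]
  by (auto simp: frechet_derivative_mult intro!: continuous_intros)

lemma C1_const: "C1 (\<lambda>x. c)"
  by simp

lemma C1_vec_nth: "C1 (\<lambda>x::'a::real_normed_vector^'n. x $ j)"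
  by (simp add: frechet_derivative_vec_nth)

lemma C1_cnj_vec_nth: "C1 (\<lambda>x::complex^'n. cnj (x $ j))"
  by (simp add: frechet_derivative_cnj_vec_nth)

lemma smooth_map_imp_C1: "smooth_map f \<Longrightarrow> C1 f"
  by (simp add: smooth_map_def)

lemma smooth_map_frechet_derivative:
  "smooth_map f \<Longrightarrow> smooth_map (\<lambda>x. frechet_derivative f (at x) v)"
  unfolding smooth_map_def by (metis C_k.simps(2))

lemma wirt_eq:
  "wirt \<iota> k f x = (frechet_derivative f (at x) (axis (\<iota> k) 1)
     - \<i> * frechet_derivative f (at x) (axis (\<iota> k) \<i>)) / 2"
  by (simp add: wirt_def)

lemma wirtbar_eq:
  "wirtbar \<iota> k f x = (frechet_derivative f (at x) (axis (\<iota> k) 1)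
     + \<i> * frechet_derivative f (at x) (axis (\<iota> k) \<i>)) / 2"
  by (simp add: wirtbar_def)

lemma C1_wirtbar:
  assumes "smooth_map f"
  shows "C1 (wirtbar \<iota> k f)"
proof -
  have "wirtbar \<iota> k f = (\<lambda>x. inverse 2 * (frechet_derivative f (at x) (axis (\<iota> k) 1)
      + \<i> * frechet_derivative f (at x) (axis (\<iota> k) \<i>)))"
    by (simp add: wirtbar_def fun_eq_iff field_simps)
  then show ?thesis
    using assms by (simp only:) (intro C1_mult C1_add C1_const smooth_map_imp_C1 smooth_map_frechet_derivative)
qed

lemma wirt_add: "f differentiable (at x) \<Longrightarrow> g differentiable (at x) \<Longrightarrow>
    wirt \<iota> k (\<lambda>x. f x + g x) x = wirt \<iota> k f x + wirt \<iota> k g x"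
  by (simp add: wirt_eq frechet_derivative_add field_simps)

lemma wirt_diff: "f differentiable (at x) \<Longrightarrow> g differentiable (at x) \<Longrightarrow>
    wirt \<iota> k (\<lambda>x. f x - g x) x = wirt \<iota> k f x - wirt \<iota> k g x"
  by (simp add: wirt_eq frechet_derivative_diff field_simps)

lemma wirt_minus: "f differentiable (at x) \<Longrightarrow> wirt \<iota> k (\<lambda>x. - f x) x = - wirt \<iota> k f x"
  by (simp add: wirt_eq frechet_derivative_minus field_simps)

lemma wirt_mult: "f differentiable (at x) \<Longrightarrow> g differentiable (at x) \<Longrightarrow>
    wirt \<iota> k (\<lambda>x. f x * g x) x = f x * wirt \<iota> k g x + wirt \<iota> k f x * g x"
  by (simp add: wirt_eq frechet_derivative_mult field_simps)

lemma wirt_vec_nth: "wirt \<iota> k (\<lambda>x. x $ j) x = (if \<iota> k = j then 1 else 0)"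
  by (simp add: wirt_eq frechet_derivative_vec_nth axis_def)

lemma wirt_cnj_vec_nth: "wirt \<iota> k (\<lambda>x. cnj (x $ j)) x = 0"
  by (simp add: wirt_eq frechet_derivative_cnj_vec_nth axis_def)

lemma wirtbar_add: "f differentiable (at x) \<Longrightarrow> g differentiable (at x) \<Longrightarrow>
    wirtbar \<iota> k (\<lambda>x. f x + g x) x = wirtbar \<iota> k f x + wirtbar \<iota> k g x"
  by (simp add: wirtbar_eq frechet_derivative_add field_simps)

lemma wirtbar_diff: "f differentiable (at x) \<Longrightarrow> g differentiable (at x) \<Longrightarrow>
    wirtbar \<iota> k (\<lambda>x. f x - g x) x = wirtbar \<iota> k f x - wirtbar \<iota> k g x"
  by (simp add: wirtbar_eq frechet_derivative_diff field_simps)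

lemma wirtbar_minus: "f differentiable (at x) \<Longrightarrow> wirtbar \<iota> k (\<lambda>x. - f x) x = - wirtbar \<iota> k f x"
  by (simp add: wirtbar_eq frechet_derivative_minus field_simps)

lemma wirtbar_mult: "f differentiable (at x) \<Longrightarrow> g differentiable (at x) \<Longrightarrow>
    wirtbar \<iota> k (\<lambda>x. f x * g x) x = f x * wirtbar \<iota> k g x + wirtbar \<iota> k f x * g x"
  by (simp add: wirtbar_eq frechet_derivative_mult field_simps)

lemma wirtbar_vec_nth: "wirtbar \<iota> k (\<lambda>x. x $ j) x = 0"
  by (simp add: wirtbar_eq frechet_derivative_vec_nth axis_def)

lemma wirtbar_cnj_vec_nth: "wirtbar \<iota> k (\<lambda>x. cnj (x $ j)) x = (if \<iota> k = j then 1 else 0)"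
  by (simp add: wirtbar_eq frechet_derivative_cnj_vec_nth axis_def)

lemmas wirtinger_rules =
  wirt_add wirt_diff wirt_minus wirt_mult wirt_vec_nth wirt_cnj_vec_nth
  wirtbar_add wirtbar_diff wirtbar_minus wirtbar_mult wirtbar_vec_nth wirtbar_cnj_vec_nth

lemma has_vector_derivative_along_line:
  assumes "f differentiable (at (x + u *\<^sub>R v))"
  shows "((\<lambda>u. f (x + u *\<^sub>R v)) has_vector_derivative frechet_derivative f (at (x + u *\<^sub>R v)) v) (at u)"
proof -
  have "((\<lambda>u. x + u *\<^sub>R v) has_derivative (\<lambda>t. t *\<^sub>R v)) (at u)"
    by (auto intro!: derivative_eq_intros)
  from diff_chain_at[OF this frechet_derivative_works[THEN iffD1, OF assms]]
  show ?thesis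
    using linear_frechet_derivative[OF assms]
    by (simp add: has_vector_derivative_def o_def linear_scale)
qed

lemma has_vector_derivative_C1_line:
  assumes "C1 f" and "\<And>u. \<gamma> u = x + u *\<^sub>R v"
  shows "((\<lambda>u. f (\<gamma> u)) has_vector_derivative frechet_derivative f (at (\<gamma> u)) v) (at u)"
  using has_vector_derivative_along_line[of f x u v] assms by simp

section \<open>Lattice translations of the coordinates x_1, y_2, w_2\<close>

lemma gauss_ints_0 [simp]: "0 \<in> gauss_ints"
  and gauss_ints_1 [simp]: "1 \<in> gauss_ints"
  and gauss_ints_i [simp]: "\<i> \<in> gauss_ints"
  by (auto simp: gauss_ints_def)

lemma gauss_ints_add: "x \<in> gauss_ints \<Longrightarrow> y \<in> gauss_ints \<Longrightarrow> x + y \<in> gauss_ints"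
  by (auto simp: gauss_ints_def)

lemma gauss_ints_minus: "x \<in> gauss_ints \<Longrightarrow> - x \<in> gauss_ints"
  by (auto simp: gauss_ints_def)

locale BR_nilmanifold =
  fixes n :: nat and \<iota> :: "nat \<Rightarrow> 'N::finite"
  assumes two_le_n: "2 \<le> n" and bij_iota: "bij_betw \<iota> {..<BR_N n} (UNIV :: 'N set)"
begin

(* x_1, y_2 and w_2 sit at positions cx n 1 = 0, cy n 2 = n and cw n 2 = 3n - 1. *)

definition "pos_w2 = 3*n - 1"

definition "x1 = \<iota> 0"
definition "y2 = \<iota> n"
definition "w2 = \<iota> pos_w2"

lemma positions_less_BR_N: "0 < BR_N n" "n < BR_N n" "pos_w2 < BR_N n"
  using two_le_n by (auto simp: BR_N_def pos_w2_def)

lemma pos_w2_neq [simp]: "pos_w2 \<noteq> 0" "pos_w2 \<noteq> n" "n \<noteq> pos_w2" "n \<noteq> 0"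
  using two_le_n by (auto simp: pos_w2_def)

lemma iota_eq_iff: "c < BR_N n \<Longrightarrow> d < BR_N n \<Longrightarrow> \<iota> c = \<iota> d \<longleftrightarrow> c = d"
  using bij_iota by (auto simp: bij_betw_def inj_on_def)

lemma iota_inv_into: "c < BR_N n \<Longrightarrow> inv_into {..<BR_N n} \<iota> (\<iota> c) = c"
  using bij_iota by (simp add: bij_betw_def inv_into_f_f)

lemma ex_iota_eq: "\<exists>c<BR_N n. j = \<iota> c"
  using bij_iota by (force simp: bij_betw_def)

lemma iota_eq_x1: "c < BR_N n \<Longrightarrow> \<iota> c = x1 \<longleftrightarrow> c = 0"
  and iota_eq_y2: "c < BR_N n \<Longrightarrow> \<iota> c = y2 \<longleftrightarrow> c = n"
  and iota_eq_w2: "c < BR_N n \<Longrightarrow> \<iota> c = w2 \<longleftrightarrow> c = pos_w2"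
  using iota_eq_iff positions_less_BR_N unfolding x1_def y2_def w2_def by blast+

lemma x1_y2_w2_distinct: "x1 \<noteq> y2" "x1 \<noteq> w2" "y2 \<noteq> w2" "y2 \<noteq> x1" "w2 \<noteq> x1" "w2 \<noteq> y2"
proof -
  have "0 \<noteq> n" "0 \<noteq> pos_w2" "n \<noteq> pos_w2" by (metis pos_w2_neq)+
  then show "x1 \<noteq> y2" "x1 \<noteq> w2" "y2 \<noteq> w2" "y2 \<noteq> x1" "w2 \<noteq> x1" "w2 \<noteq> y2"
    unfolding x1_def y2_def w2_def by (metis iota_eq_iff positions_less_BR_N)+
qed

lemma iota_positions: "\<iota> 0 = x1" "\<iota> n = y2" "\<iota> pos_w2 = w2"
  by (simp_all add: x1_def y2_def w2_def)

definition lattice_elt :: "complex \<Rightarrow> complex \<Rightarrow> complex \<Rightarrow> complex^'N" where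
  "lattice_elt a b c = axis x1 a + axis y2 b + axis w2 c"

lemma vec_to_fun_lattice_elt:
  "d < BR_N n \<Longrightarrow> vec_to_fun \<iota> (lattice_elt a b c) d =
     (if d = 0 then a else if d = n then b else if d = pos_w2 then c else 0)"
  using two_le_n x1_y2_w2_distinct
  by (simp add: vec_to_fun_def lattice_elt_def axis_def iota_eq_x1 iota_eq_y2 iota_eq_w2)

lemma BR_matrix_zero: "BR_matrix n (\<lambda>_. 0) i j = (if i = j \<and> 1 \<le> i \<and> i \<le> 2*n+2 then 1 else 0)"
  by (simp add: BR_matrix_def)

lemma BR_matrix_lattice_elt: "BR_matrix n (vec_to_fun \<iota> (lattice_elt a b c)) i j =
   BR_matrix n (\<lambda>_. 0) i j + (if i = 2 \<and> j = n+2 then -a else 0)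
   + (if i = 2 \<and> j = 2*n+2 then c else 0) + (if i = n+2 \<and> j = 2*n+2 then b else 0)"
proof -
  let ?p = "vec_to_fun \<iota> (lattice_elt a b c)"
  have row1: "?p (cy n 1) = 0" "?p (cw n 1) = 0" "?p (cz n 1) = 0"
    using two_le_n by (simp add: vec_to_fun_lattice_elt BR_N_def pos_w2_def cy_def cw_def cz_def; presburger)+
  have rows_x: "?p (cz n (i-1)) = 0" "?p (cx n (i-1)) = (if i = 2 then a else 0)"
       "?p (cw n i) = (if i = 2 then c else 0)" if "2 \<le> i" "i \<le> n" for i
    using two_le_n that by (simp add: vec_to_fun_lattice_elt BR_N_def pos_w2_def cx_def cw_def cz_def; presburger)+
  have rows_y: "?p (cy n (i-n)) = (if i = n+2 then b else 0)" if "n+1 \<le> i" "i \<le> 2*n" for i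
    using two_le_n that by (simp add: vec_to_fun_lattice_elt BR_N_def pos_w2_def cy_def; presburger)
  consider "i = 1" | "2 \<le> i \<and> i \<le> n" | "n+1 \<le> i \<and> i \<le> 2*n" | "i = 2*n+1" | "i = 2*n+2"
    | "i = 0 \<or> i > 2*n+2" by linarith
  then show ?thesis
  proof cases
    case 2 then show ?thesis using two_le_n rows_x[of i] unfolding BR_matrix_def by (cases "i = 2") simp_all
  next
    case 3 then show ?thesis using two_le_n rows_y[of i] unfolding BR_matrix_def by (cases "i = n+2") simp_all
  next
    case 6 then show ?thesis using two_le_n unfolding BR_matrix_def by (elim disjE; simp)
  qed (use two_le_n row1 in \<open>simp_all add: BR_matrix_def\<close>)
qed

lemma BR_matrix_row_y2:
  "BR_matrix n p (n+2) j = (if j = n+2 then 1 else 0) + (if j = 2*n+2 then p n else 0)"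
  using two_le_n by (simp add: BR_matrix_def cy_def)

lemma BR_matrix_last_row: "BR_matrix n p (2*n+2) j = (if j = 2*n+2 then 1 else 0)"
  using two_le_n by (simp add: BR_matrix_def)

lemma BR_matrix_outside: "\<not> (1 \<le> i \<and> i \<le> 2*n+2) \<Longrightarrow> BR_matrix n p i j = 0"
  by (cases "i = 0") (simp_all add: BR_matrix_def)

lemma mat_mult_lattice_elt:
  "mat_mult n (BR_matrix n (vec_to_fun \<iota> (lattice_elt a b c))) (BR_matrix n p) i j =
   BR_matrix n p i j + (BR_matrix n (vec_to_fun \<iota> (lattice_elt a b (c - a * p n))) i j - BR_matrix n (\<lambda>_. 0) i j)"
proof -
  let ?B = "BR_matrix n p"
  have "mat_mult n (BR_matrix n (vec_to_fun \<iota> (lattice_elt a b c))) ?B i j =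
     (\<Sum>k\<in>{1..2*n+2}. if k = i then ?B i j else 0)
     + (\<Sum>k\<in>{1..2*n+2}. if k = n+2 then (if i = 2 then -a * ?B (n+2) j else 0) else 0)
     + (\<Sum>k\<in>{1..2*n+2}. if k = 2*n+2 then (if i = 2 then c * ?B (2*n+2) j else 0) else 0)
     + (\<Sum>k\<in>{1..2*n+2}. if k = 2*n+2 then (if i = n+2 then b * ?B (2*n+2) j else 0) else 0)"
    unfolding mat_mult_def BR_matrix_lattice_elt BR_matrix_zero sum.distrib[symmetric]
    using two_le_n by (intro sum.cong) auto
  also have "\<dots> = ?B i j + (if i = 2 then -a * ?B (n+2) j + c * ?B (2*n+2) j else 0)
     + (if i = n+2 then b * ?B (2*n+2) j else 0)"
  proof (cases "1 \<le> i \<and> i \<le> 2*n+2")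
    case False
    then have "i \<noteq> 2" "i \<noteq> n+2" using two_le_n by auto
    with False show ?thesis using two_le_n by (simp add: sum.delta BR_matrix_outside[OF False])
  qed (use two_le_n in \<open>simp add: sum.delta\<close>)
  also have "\<dots> = ?B i j + (BR_matrix n (vec_to_fun \<iota> (lattice_elt a b (c - a * p n))) i j - BR_matrix n (\<lambda>_. 0) i j)"
    unfolding BR_matrix_lattice_elt BR_matrix_row_y2 BR_matrix_last_row using two_le_n
    by (auto simp: algebra_simps)
  finally show ?thesis .
qed

lemma BR_coords_BR_matrix: "c < BR_N n \<Longrightarrow> BR_coords n (BR_matrix n p) c = p c"
proof -
  assume c: "c < BR_N n"
  consider "c < n - 1" | "n - 1 \<le> c \<and> c < 2*n - 1" | "2*n - 1 \<le> c \<and> c < 3*n - 2" | "3*n - 2 \<le> c \<and> c < 4*n - 2"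
    using c by (simp add: BR_N_def) linarith
  then show ?thesis
  proof cases
    case 1
    have "c \<noteq> n" "c+2 \<le> n" using 1 two_le_n by linarith+
    then have "BR_matrix n p (c+2) (n+c+2) = - p c" by (simp add: BR_matrix_def cx_def)
    with 1 show ?thesis by (simp add: BR_coords_def)
  next
    case 2
    have "n + (c+2-n) = c+2" "\<not> c+2 \<le> n" "c+2 \<le> 2*n" "n+1 \<le> c+2" "c+2 \<noteq> 2*n+2" "c+2 \<noteq> 1" "c+2 \<noteq> 2*n+1"
      using 2 two_le_n by linarith+
    then have "BR_matrix n p (n + (c+2-n)) (2*n+2) = p c" by (simp add: BR_matrix_def cy_def)
    with 2 show ?thesis by (simp add: BR_coords_def)
  next
    case 3
    have "c+3-2*n \<noteq> 1" "2 \<le> c+3-2*n" "c+3-2*n \<le> n" "n + (c+2-2*n) = n + (c+3-2*n) - 1"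
        "c+3-2*n - 1 = c+2-2*n" "2*n + (c+2-2*n) - 2 = c"
      using 3 two_le_n by linarith+
    then have "BR_matrix n p (c+3-2*n) (n + (c+2-2*n)) = cnj (p c)" by (simp add: BR_matrix_def cz_def)
    moreover have "\<not> c < n - 1" "\<not> c < 2*n - 1" "c < 3*n - 2" using 3 two_le_n by linarith+
    ultimately show ?thesis by (simp add: BR_coords_def)
  next
    case 4
    have "1 \<le> c+3-3*n" "c+3-3*n \<le> n" "3*n + (c+3-3*n) - 3 = c" "c+3-3*n \<noteq> 2*n+2"
        "2*n+2 \<noteq> n + (c+3-3*n) - 1" "2*n+2 \<noteq> n + (c+3-3*n)"
      using 4 two_le_n by linarith+
    then have "BR_matrix n p (c+3-3*n) (2*n+2) = p c"
      by (cases "c+3-3*n = 1") (simp_all add: BR_matrix_def cw_def)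
    moreover have "\<not> c < n - 1" "\<not> c < 2*n - 1" "\<not> c < 3*n - 2" using 4 two_le_n by linarith+
    ultimately show ?thesis by (simp add: BR_coords_def)
  qed
qed

lemma BR_coords_add_diff:
  "BR_coords n (\<lambda>i j. M i j + (P i j - Q i j)) c = BR_coords n M c + (BR_coords n P c - BR_coords n Q c)"
  by (simp add: BR_coords_def)

(* Left multiplication by lattice_elt a b c (BR_mult_lattice_elt); the shear of w_2 by -a y_2
   comes from the entry -x_1 in row 2 of the matrix. *)
definition left_transl :: "complex \<Rightarrow> complex \<Rightarrow> complex \<Rightarrow> complex^'N \<Rightarrow> complex^'N" where
  "left_transl a b c X = X + lattice_elt a b (c - a * X $ y2)"

lemma BR_mult_lattice_elt: "BR_mult n \<iota> (lattice_elt a b c) X = left_transl a b c X"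
proof (subst vec_eq_iff, intro allI)
  fix j :: 'N
  obtain d where d: "d < BR_N n" "j = \<iota> d" using ex_iota_eq by blast
  let ?p = "vec_to_fun \<iota> X"
  have "BR_mult n \<iota> (lattice_elt a b c) X $ j
      = BR_coords n (mat_mult n (BR_matrix n (vec_to_fun \<iota> (lattice_elt a b c))) (BR_matrix n ?p)) d"
    using d by (simp add: BR_mult_def fun_to_vec_def iota_inv_into)
  also have "\<dots> = ?p d + vec_to_fun \<iota> (lattice_elt a b (c - a * ?p n)) d"
    unfolding mat_mult_lattice_elt BR_coords_add_diff BR_coords_BR_matrix[OF d(1)] by simp
  also have "\<dots> = left_transl a b c X $ j"
    using d by (simp add: left_transl_def vec_to_fun_def y2_def)
  finally show "BR_mult n \<iota> (lattice_elt a b c) X $ j = left_transl a b c X $ j" .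
qed

lemma lattice_elt_in_BR_Gamma:
  "a \<in> gauss_ints \<Longrightarrow> b \<in> gauss_ints \<Longrightarrow> c \<in> gauss_ints \<Longrightarrow> lattice_elt a b c \<in> BR_Gamma n \<iota>"
  unfolding BR_Gamma_def mem_Collect_eq BR_matrix_lattice_elt BR_matrix_zero
  using two_le_n by (auto intro!: gauss_ints_add gauss_ints_minus)

definition dleft_transl :: "complex \<Rightarrow> complex^'N \<Rightarrow> complex^'N" where
  "dleft_transl a V = V - axis w2 (a * V $ y2)"

lemma left_transl_add: "left_transl a b c (X + V) = left_transl a b c X + dleft_transl a V"
  by (simp add: left_transl_def dleft_transl_def lattice_elt_def vec_eq_iff axis_def algebra_simps)

lemma dleft_transl_axis:
  assumes "d < BR_N n" "e < BR_N n"
  shows "dleft_transl a (axis (\<iota> e) t) $ \<iota> d = ((if d = e then 1 else 0) - (if d = pos_w2 \<and> e = n then a else 0)) * t"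
proof -
  have "\<iota> d = \<iota> e \<longleftrightarrow> d = e" "y2 = \<iota> e \<longleftrightarrow> e = n" "\<iota> d = w2 \<longleftrightarrow> d = pos_w2"
    using iota_eq_iff[OF assms] iota_eq_y2[OF assms(2)] iota_eq_w2[OF assms(1)] by auto
  then show ?thesis by (simp add: dleft_transl_def axis_def algebra_simps)
qed

lemma BR_jac_lattice_elt:
  assumes "d < BR_N n" "e < BR_N n"
  shows "BR_jac n \<iota> (lattice_elt a b c) X d e = (if d = e then 1 else 0) - (if d = pos_w2 \<and> e = n then a else 0)"
    (is "_ = ?\<beta>")
proof -
  have "BR_jac n \<iota> (lattice_elt a b c) X d e = deriv (\<lambda>t. left_transl a b c X $ \<iota> d + ?\<beta> * t) 0"
    by (simp add: BR_jac_def BR_mult_lattice_elt left_transl_add dleft_transl_axis[OF assms] mult.commute)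
  also have "\<dots> = ?\<beta>"
    by (rule DERIV_imp_deriv) (auto intro!: derivative_eq_intros)
  finally show ?thesis .
qed

definition transl_jac :: "complex \<Rightarrow> nat \<Rightarrow> nat \<Rightarrow> complex" where
  "transl_jac a d e = (if d = e then 1 else 0) - (if d = pos_w2 \<and> e = n then a else 0)"

definition jac_pullback :: "complex \<Rightarrow> (nat \<Rightarrow> nat \<Rightarrow> complex) \<Rightarrow> nat \<Rightarrow> nat \<Rightarrow> complex" where
  "jac_pullback a G e f = (\<Sum>c<BR_N n. \<Sum>d<BR_N n. transl_jac a c e * G c d * cnj (transl_jac a d f))"

lemma sum_transl_jac_mult:
  "e < BR_N n \<Longrightarrow> (\<Sum>c<BR_N n. transl_jac a c e * F c) = F e - (if e = n then a * F pos_w2 else 0)"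
  using positions_less_BR_N
  by (simp add: transl_jac_def left_diff_distrib sum_subtractf if_distrib[of "\<lambda>x. x * _"] sum.delta
      cong: if_cong)

lemma sum_mult_cnj_transl_jac:
  "f < BR_N n \<Longrightarrow> (\<Sum>d<BR_N n. F d * cnj (transl_jac a d f)) = F f - (if f = n then cnj a * F pos_w2 else 0)"
  using positions_less_BR_N
  by (simp add: transl_jac_def right_diff_distrib sum_subtractf if_distrib[of "\<lambda>x. _ * x"]
      if_distrib[of cnj] sum.delta cong: if_cong)

lemma jac_pullback_eq:
  assumes "e < BR_N n" "f < BR_N n"
  shows "jac_pullback a G e f = G e f - (if f = n then cnj a * G e (pos_w2) else 0)
     - (if e = n then a * G pos_w2 f else 0) + (if e = n \<and> f = n then a * cnj a * G pos_w2 (pos_w2) else 0)"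
    (is "_ = ?rhs")
proof -
  have "jac_pullback a G e f = (\<Sum>c<BR_N n. transl_jac a c e * (\<Sum>d<BR_N n. G c d * cnj (transl_jac a d f)))"
    by (simp add: jac_pullback_def sum_distrib_left mult.assoc)
  also have "\<dots> = (\<Sum>c<BR_N n. transl_jac a c e * (G c f - (if f = n then cnj a * G c (pos_w2) else 0)))"
    by (simp add: sum_mult_cnj_transl_jac[OF assms(2)])
  also have "\<dots> = G e f - (if f = n then cnj a * G e (pos_w2) else 0)
      - (if e = n then a * (G pos_w2 f - (if f = n then cnj a * G pos_w2 (pos_w2) else 0)) else 0)"
    by (rule sum_transl_jac_mult[OF assms(1)])
  also have "\<dots> = ?rhs"
    by (simp add: algebra_simps)
  finally show ?thesis .
qed

lemma has_derivative_jac_pullback: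
  assumes "\<And>c d. c < BR_N n \<Longrightarrow> d < BR_N n \<Longrightarrow> (G c d has_derivative G' c d) (at x)"
  shows "((\<lambda>x. jac_pullback a (\<lambda>c d. G c d x) e f) has_derivative
      (\<lambda>v. jac_pullback a (\<lambda>c d. G' c d v) e f)) (at x)"
  unfolding jac_pullback_def using assms
  by (intro has_derivative_sum) (auto intro!: has_derivative_mult_left has_derivative_mult_right)

lemma jac_pullback_wirtinger_combination:
  "jac_pullback a (\<lambda>c d. (P c d + \<i> * Q c d) / 2) e f = (jac_pullback a P e f + \<i> * jac_pullback a Q e f) / 2"
  by (simp add: jac_pullback_def sum_divide_distrib[symmetric] sum_distrib_left sum.distrib[symmetric] algebra_simps)

lemma linear_dleft_transl: "linear (dleft_transl a)"
  by (rule linearI) (simp_all add: dleft_transl_def vec_eq_iff axis_def algebra_simps; simp add: scaleR_conv_of_real)+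

lemma has_derivative_left_transl: "(left_transl a b c has_derivative dleft_transl a) (at x)"
proof -
  have "left_transl a b c = (\<lambda>x. dleft_transl a x + lattice_elt a b c)"
    by (simp add: fun_eq_iff left_transl_def dleft_transl_def lattice_elt_def vec_eq_iff axis_def algebra_simps)
  then show ?thesis
    using linear_dleft_transl linear_conv_bounded_linear
    by (metis bounded_linear_imp_has_derivative has_derivative_add_const)
qed

lemma linear_conj_axis:
  fixes L :: "complex^'m \<Rightarrow> complex"
  assumes "linear L"
  shows "L (axis j z) + \<i> * L (axis j (z * \<i>)) = cnj z * (L (axis j 1) + \<i> * L (axis j \<i>))"
proof -
  have re_im: "axis j z = Re z *\<^sub>R axis j 1 + Im z *\<^sub>R axis j \<i>"
    "axis j (z * \<i>) = (- Im z) *\<^sub>R axis j 1 + Re z *\<^sub>R axis j \<i>"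
    by (simp_all add: vec_eq_iff axis_def complex_eq_iff)
  show ?thesis
    unfolding re_im linear_add[OF assms] linear_scale[OF assms]
    by (simp add: scaleR_conv_of_real complex_eq_iff algebra_simps)
qed

lemma linear_dleft_transl_axis:
  fixes L :: "complex^'N \<Rightarrow> complex"
  assumes "linear L" and "k < BR_N n"
  shows "(L (dleft_transl a (axis (\<iota> k) 1)) + \<i> * L (dleft_transl a (axis (\<iota> k) \<i>))) / 2
    = (L (axis (\<iota> k) 1) + \<i> * L (axis (\<iota> k) \<i>)) / 2
      - (if k = n then cnj a * ((L (axis w2 1) + \<i> * L (axis w2 \<i>)) / 2) else 0)"
proof (cases "k = n")
  case True
  then have dl: "dleft_transl a (axis (\<iota> k) z) = axis (\<iota> k) z - axis w2 (a * z)" for z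
    using x1_y2_w2_distinct by (simp add: dleft_transl_def axis_def y2_def)
  show ?thesis
    unfolding dl linear_diff[OF assms(1)] using linear_conj_axis[OF assms(1), of w2 a] True
    by (simp add: field_simps)
next
  case False
  then have "dleft_transl a (axis (\<iota> k) z) = axis (\<iota> k) z" for z
    using iota_eq_y2[OF assms(2)] by (simp add: dleft_transl_def axis_def vec_eq_iff)
  with False show ?thesis by simp
qed

(* Real coordinates (Re x_1, Im x_1, Re y_2, Im y_2, Re w_2, Im w_2) on the slice where all other
   coordinates vanish; unit_cube6 is a fundamental domain there for the left translations moving
   x_1, y_2 or w_2 by 1 or i (left_transl_slice). *)
definition slice :: "r6 \<Rightarrow> complex^'N" where
  "slice = (\<lambda>(s1, t1, s2, t2, s3, t3). lattice_elt (Complex s1 t1) (Complex s2 t2) (Complex s3 t3))"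

lemma continuous_on_slice: "continuous_on UNIV slice"
proof -
  have "slice = (\<lambda>(s1, t1, s2, t2, s3, t3). s1 *\<^sub>R axis x1 1 + t1 *\<^sub>R axis x1 \<i> + s2 *\<^sub>R axis y2 1
      + t2 *\<^sub>R axis y2 \<i> + s3 *\<^sub>R axis w2 1 + t3 *\<^sub>R axis w2 \<i>)"
    by (auto simp: slice_def lattice_elt_def vec_eq_iff axis_def complex_eq_iff fun_eq_iff)
  then show ?thesis
    by (simp add: case_prod_beta') (intro continuous_intros)
qed

lemma slice_shift:
  "slice (u, r) = slice (0, r) + u *\<^sub>R axis x1 1"
  "slice (s1, u, r') = slice (s1, 0, r') + u *\<^sub>R axis x1 \<i>"
  "slice (s1, t1, u, r'') = slice (s1, t1, 0, r'') + u *\<^sub>R axis y2 1"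
  "slice (s1, t1, s2, u, r''') = slice (s1, t1, s2, 0, r''') + u *\<^sub>R axis y2 \<i>"
  "slice (s1, t1, s2, t2, u, t3) = slice (s1, t1, s2, t2, 0, t3) + u *\<^sub>R axis w2 1"
  "slice (s1, t1, s2, t2, s3, u) = slice (s1, t1, s2, t2, s3, 0) + u *\<^sub>R axis w2 \<i>"
  by (auto simp: slice_def lattice_elt_def vec_eq_iff axis_def complex_eq_iff split: prod.splits)

lemma left_transl_slice:
  "left_transl a b c (slice (s1, t1, s2, t2, s3, t3)) = slice (s1 + Re a, t1 + Im a, s2 + Re b, t2 + Im b,
     s3 + Re c - (Re a * s2 - Im a * t2), t3 + Im c - (Re a * t2 + Im a * s2))"
  using x1_y2_w2_distinct
  by (simp add: slice_def left_transl_def lattice_elt_def vec_eq_iff axis_def complex_eq_iff)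

lemma continuous_on_C1_slice:
  assumes "C1 f"
  shows "continuous_on UNIV (\<lambda>p. f (slice p))"
    and "continuous_on UNIV (\<lambda>p. frechet_derivative f (at (slice p)) v)"
proof -
  have "continuous_on UNIV f" "continuous_on UNIV (\<lambda>x. frechet_derivative f (at x) v)"
    using assms C1_imp_continuous by simp_all
  then show "continuous_on UNIV (\<lambda>p. f (slice p))"
    and "continuous_on UNIV (\<lambda>p. frechet_derivative f (at (slice p)) v)"
    using continuous_on_UNIV_comp continuous_on_slice by blast+
qed

lemma periodic_slice_w2:
  assumes "\<And>x. f (left_transl 0 0 1 x) = f x" and "\<And>x. f (left_transl 0 0 \<i> x) = f x"
  shows "f (slice (s1, t1, s2, t2, s3 + 1, t3)) = f (slice (s1, t1, s2, t2, s3, t3))"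
    and "f (slice (s1, t1, s2, t2, s3, t3 + 1)) = f (slice (s1, t1, s2, t2, s3, t3))"
  using assms[of "slice (s1, t1, s2, t2, s3, t3)"] by (simp_all add: left_transl_slice)

lemma integral_slice_derivative_x1_re:
  fixes f :: "complex^'N \<Rightarrow> complex"
  assumes F: "C1 f" and inv: "\<And>x. f (left_transl 1 0 0 x) = f x"
    "\<And>x. f (left_transl 0 0 1 x) = f x" "\<And>x. f (left_transl 0 0 \<i> x) = f x"
  shows "integral unit_cube6 (\<lambda>p. frechet_derivative f (at (slice p)) (axis x1 1)) = 0"
proof (rule integral_cube6_derivative_s1)
  show "((\<lambda>u. f (slice (u, r))) has_vector_derivative
      frechet_derivative f (at (slice (u, r))) (axis x1 1)) (at u)" for u r
    by (rule has_vector_derivative_C1_line[OF F]) (rule slice_shift)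
  show "f (slice (1, t1, s2, t2, s3, t3)) = f (slice (0, t1, s2, t2, s3 + s2, t3 + t2))" for t1 s2 t2 s3 t3
    using inv(1)[of "slice (0, t1, s2, t2, s3 + s2, t3 + t2)"] by (simp add: left_transl_slice)
qed (use continuous_on_C1_slice[OF F] periodic_slice_w2[OF inv(2,3)] in auto)

lemma integral_slice_derivative_x1_im:
  fixes f :: "complex^'N \<Rightarrow> complex"
  assumes F: "C1 f" and inv: "\<And>x. f (left_transl \<i> 0 0 x) = f x"
    "\<And>x. f (left_transl 0 0 1 x) = f x" "\<And>x. f (left_transl 0 0 \<i> x) = f x"
  shows "integral unit_cube6 (\<lambda>p. frechet_derivative f (at (slice p)) (axis x1 \<i>)) = 0"
proof (rule integral_cube6_derivative_t1)
  show "((\<lambda>u. f (slice (s1, u, r))) has_vector_derivative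
      frechet_derivative f (at (slice (s1, u, r))) (axis x1 \<i>)) (at u)" for s1 u r
    by (rule has_vector_derivative_C1_line[OF F]) (rule slice_shift)
  show "f (slice (s1, 1, s2, t2, s3, t3)) = f (slice (s1, 0, s2, t2, s3 - t2, t3 + s2))" for s1 s2 t2 s3 t3
    using inv(1)[of "slice (s1, 0, s2, t2, s3 - t2, t3 + s2)"] by (simp add: left_transl_slice)
qed (use continuous_on_C1_slice[OF F] periodic_slice_w2[OF inv(2,3)] in auto)

lemma integral_slice_derivative_y2_re:
  fixes f :: "complex^'N \<Rightarrow> complex"
  assumes F: "C1 f" and inv: "\<And>x. f (left_transl 0 1 0 x) = f x"
  shows "integral unit_cube6 (\<lambda>p. frechet_derivative f (at (slice p)) (axis y2 1)) = 0"
proof (rule integral_cube6_derivative_s2)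
  show "((\<lambda>u. f (slice (s1, t1, u, r))) has_vector_derivative
      frechet_derivative f (at (slice (s1, t1, u, r))) (axis y2 1)) (at u)" for s1 t1 u r
    by (rule has_vector_derivative_C1_line[OF F]) (rule slice_shift)
  show "f (slice (s1, t1, 1, r)) = f (slice (s1, t1, 0, r))" for s1 t1 r
  proof -
    obtain t2 s3 t3 where "r = (t2, s3, t3)" using prod_cases3 by blast
    then show ?thesis using inv[of "slice (s1, t1, 0, r)"] by (simp add: left_transl_slice)
  qed
qed (use continuous_on_C1_slice[OF F] in auto)

lemma integral_slice_derivative_y2_im:
  fixes f :: "complex^'N \<Rightarrow> complex"
  assumes F: "C1 f" and inv: "\<And>x. f (left_transl 0 \<i> 0 x) = f x"
  shows "integral unit_cube6 (\<lambda>p. frechet_derivative f (at (slice p)) (axis y2 \<i>)) = 0"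
proof (rule integral_cube6_derivative_t2)
  show "((\<lambda>u. f (slice (s1, t1, s2, u, r))) has_vector_derivative
      frechet_derivative f (at (slice (s1, t1, s2, u, r))) (axis y2 \<i>)) (at u)" for s1 t1 s2 u r
    by (rule has_vector_derivative_C1_line[OF F]) (rule slice_shift)
  show "f (slice (s1, t1, s2, 1, r)) = f (slice (s1, t1, s2, 0, r))" for s1 t1 s2 r
  proof -
    obtain s3 t3 where "r = (s3, t3)" by fastforce
    then show ?thesis using inv[of "slice (s1, t1, s2, 0, r)"] by (simp add: left_transl_slice)
  qed
qed (use continuous_on_C1_slice[OF F] in auto)

lemma integral_slice_derivative_w2_re:
  fixes f :: "complex^'N \<Rightarrow> complex"
  assumes F: "C1 f" and inv: "\<And>x. f (left_transl 0 0 1 x) = f x"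
  shows "integral unit_cube6 (\<lambda>p. frechet_derivative f (at (slice p)) (axis w2 1)) = 0"
proof (rule integral_cube6_derivative_s3)
  show "((\<lambda>u. f (slice (s1, t1, s2, t2, u, t3))) has_vector_derivative
      frechet_derivative f (at (slice (s1, t1, s2, t2, u, t3))) (axis w2 1)) (at u)" for s1 t1 s2 t2 u t3
    by (rule has_vector_derivative_C1_line[OF F]) (rule slice_shift)
  show "f (slice (s1, t1, s2, t2, 1, t3)) = f (slice (s1, t1, s2, t2, 0, t3))" for s1 t1 s2 t2 t3
    using inv[of "slice (s1, t1, s2, t2, 0, t3)"] by (simp add: left_transl_slice)
qed (use continuous_on_C1_slice[OF F] in auto)

lemma integral_slice_derivative_w2_im:
  fixes f :: "complex^'N \<Rightarrow> complex"
  assumes F: "C1 f" and inv: "\<And>x. f (left_transl 0 0 \<i> x) = f x"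
  shows "integral unit_cube6 (\<lambda>p. frechet_derivative f (at (slice p)) (axis w2 \<i>)) = 0"
proof (rule integral_cube6_derivative_t3)
  show "((\<lambda>u. f (slice (s1, t1, s2, t2, s3, u))) has_vector_derivative
      frechet_derivative f (at (slice (s1, t1, s2, t2, s3, u))) (axis w2 \<i>)) (at u)" for s1 t1 s2 t2 s3 u
    by (rule has_vector_derivative_C1_line[OF F]) (rule slice_shift)
  show "f (slice (s1, t1, s2, t2, s3, 1)) = f (slice (s1, t1, s2, t2, s3, 0))" for s1 t1 s2 t2 s3
    using inv[of "slice (s1, t1, s2, t2, s3, 0)"] by (simp add: left_transl_slice)
qed (use continuous_on_C1_slice[OF F] in auto)

lemma has_integral_slice_wirtinger_0:
  fixes f :: "complex^'N \<Rightarrow> complex"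
  assumes F: "C1 f" and k: "\<iota> k = j"
    and re: "integral unit_cube6 (\<lambda>p. frechet_derivative f (at (slice p)) (axis j 1)) = 0"
    and im: "integral unit_cube6 (\<lambda>p. frechet_derivative f (at (slice p)) (axis j \<i>)) = 0"
  shows "((\<lambda>p. wirt \<iota> k f (slice p)) has_integral 0) unit_cube6"
    and "((\<lambda>p. wirtbar \<iota> k f (slice p)) has_integral 0) unit_cube6"
proof -
  have int: "(\<lambda>p. frechet_derivative f (at (slice p)) v) integrable_on unit_cube6" for v
    by (rule integrable_continuous, rule continuous_on_subset[OF continuous_on_C1_slice(2)[OF F]]) simp
  have re0: "((\<lambda>p. frechet_derivative f (at (slice p)) (axis j 1)) has_integral 0) unit_cube6"
    using integrable_integral[OF int[of "axis j 1"]] re by simp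
  have im0: "((\<lambda>p. \<i> * frechet_derivative f (at (slice p)) (axis j \<i>)) has_integral 0) unit_cube6"
    using has_integral_mult_right[OF integrable_integral[OF int[of "axis j \<i>"]], of \<i>] im by simp
  show "((\<lambda>p. wirt \<iota> k f (slice p)) has_integral 0) unit_cube6"
    using has_integral_divide[OF has_integral_diff[OF re0 im0], of 2] by (simp add: wirt_eq k)
  show "((\<lambda>p. wirtbar \<iota> k f (slice p)) has_integral 0) unit_cube6"
    using has_integral_divide[OF has_integral_add[OF re0 im0], of 2] by (simp add: wirtbar_eq k)
qed

end

section \<open>An SKT metric would have vanishing mean g_{w_2 w_2}\<close>

locale BR_SKT = BR_nilmanifold n \<iota> for n :: nat and \<iota> :: "nat \<Rightarrow> 'N::finite" +
  fixes g :: "nat \<Rightarrow> nat \<Rightarrow> complex^'N \<Rightarrow> complex"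
  assumes SKT: "BR_SKT_metric n \<iota> g"
begin

lemma hermitian: "BR_hermitian_metric n \<iota> g"
  and pluriclosed: "BR_pluriclosed n \<iota> g"
  using SKT by (simp_all add: BR_SKT_metric_def)

lemma smooth_g: "c < BR_N n \<Longrightarrow> d < BR_N n \<Longrightarrow> smooth_map (g c d)"
  using hermitian by (simp add: BR_hermitian_metric_def)

lemma C1_g: "c < BR_N n \<Longrightarrow> d < BR_N n \<Longrightarrow> C1 (g c d)"
  and C1_wirtbar_g: "c < BR_N n \<Longrightarrow> d < BR_N n \<Longrightarrow> C1 (wirtbar \<iota> k (g c d))"
  by (simp_all only: smooth_map_imp_C1 C1_wirtbar smooth_g)

lemma differentiable_g [simp]: "c < BR_N n \<Longrightarrow> d < BR_N n \<Longrightarrow> g c d differentiable (at x)"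
  and differentiable_wirtbar_g [simp]: "c < BR_N n \<Longrightarrow> d < BR_N n \<Longrightarrow> wirtbar \<iota> k (g c d) differentiable (at x)"
  using C1_g C1_wirtbar_g by simp_all

lemma g_left_transl:
  assumes "a \<in> gauss_ints" "b \<in> gauss_ints" "c \<in> gauss_ints" and "e < BR_N n" "f < BR_N n"
  shows "g e f x = jac_pullback a (\<lambda>c' d. g c' d (left_transl a b c x)) e f"
proof -
  have "g e f x = (\<Sum>c'<BR_N n. \<Sum>d<BR_N n. BR_jac n \<iota> (lattice_elt a b c) x c' e
      * g c' d (BR_mult n \<iota> (lattice_elt a b c) x) * cnj (BR_jac n \<iota> (lattice_elt a b c) x d f))"
    using hermitian lattice_elt_in_BR_Gamma[OF assms(1-3)] assms(4,5)
    unfolding BR_hermitian_metric_def by blast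
  also have "\<dots> = jac_pullback a (\<lambda>c' d. g c' d (left_transl a b c x)) e f"
    unfolding jac_pullback_def using assms(4,5)
    by (intro sum.cong refl) (simp add: BR_jac_lattice_elt BR_mult_lattice_elt transl_jac_def)
  finally show ?thesis .
qed

lemma frechet_derivative_g_left_transl:
  assumes "a \<in> gauss_ints" "b \<in> gauss_ints" "c \<in> gauss_ints" and "e < BR_N n" "f < BR_N n"
  shows "frechet_derivative (g e f) (at x) v
    = jac_pullback a (\<lambda>c' d. frechet_derivative (g c' d) (at (left_transl a b c x)) (dleft_transl a v)) e f"
proof -
  have "((\<lambda>x. g c' d (left_transl a b c x)) has_derivative
      (\<lambda>v. frechet_derivative (g c' d) (at (left_transl a b c x)) (dleft_transl a v))) (at x)"
    if "c' < BR_N n" "d < BR_N n" for c' d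
    using diff_chain_at[OF has_derivative_left_transl frechet_derivative_works[THEN iffD1, OF differentiable_g[OF that]]]
    by (simp add: o_def)
  then have "((\<lambda>x. jac_pullback a (\<lambda>c' d. g c' d (left_transl a b c x)) e f) has_derivative
      (\<lambda>v. jac_pullback a (\<lambda>c' d. frechet_derivative (g c' d) (at (left_transl a b c x)) (dleft_transl a v)) e f)) (at x)"
    by (rule has_derivative_jac_pullback)
  moreover have "g e f = (\<lambda>x. jac_pullback a (\<lambda>c' d. g c' d (left_transl a b c x)) e f)"
    using g_left_transl[OF assms] by blast
  ultimately show ?thesis
    by (simp add: frechet_derivative_at[symmetric])
qed

lemma wirtbar_g_left_transl:
  assumes "a \<in> gauss_ints" "b \<in> gauss_ints" "c \<in> gauss_ints" and "e < BR_N n" "f < BR_N n" "k < BR_N n"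
  shows "wirtbar \<iota> k (g e f) x = jac_pullback a (\<lambda>c' d. wirtbar \<iota> k (g c' d) (left_transl a b c x)
     - (if k = n then cnj a * wirtbar \<iota> (pos_w2) (g c' d) (left_transl a b c x) else 0)) e f"
proof -
  let ?y = "left_transl a b c x"
  have "wirtbar \<iota> k (g e f) x = jac_pullback a (\<lambda>c' d. (frechet_derivative (g c' d) (at ?y) (dleft_transl a (axis (\<iota> k) 1))
     + \<i> * frechet_derivative (g c' d) (at ?y) (dleft_transl a (axis (\<iota> k) \<i>))) / 2) e f"
    unfolding wirtbar_eq jac_pullback_wirtinger_combination frechet_derivative_g_left_transl[OF assms(1-5)] ..
  also have "\<dots> = jac_pullback a (\<lambda>c' d. wirtbar \<iota> k (g c' d) ?y
     - (if k = n then cnj a * wirtbar \<iota> (pos_w2) (g c' d) ?y else 0)) e f"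
    unfolding jac_pullback_def
    by (intro sum.cong refl arg_cong2[where f="(*)"] arg_cong[where f="(*) _"])
      (simp add: linear_dleft_transl_axis[OF linear_frechet_derivative[OF differentiable_g] assms(6)] wirtbar_eq w2_def)
  finally show ?thesis .
qed

definition flux_x :: "complex^'N \<Rightarrow> complex" where
  "flux_x x = wirtbar \<iota> 0 (g n n) x - cnj (x $ x1) * wirtbar \<iota> 0 (g n pos_w2) x
     - x $ x1 * wirtbar \<iota> 0 (g pos_w2 n) x + x $ x1 * cnj (x $ x1) * wirtbar \<iota> 0 (g pos_w2 pos_w2) x
     - wirtbar \<iota> n (g n 0) x + x $ x1 * wirtbar \<iota> n (g pos_w2 0) x
     + cnj (x $ x1) * wirtbar \<iota> pos_w2 (g n 0) x - x $ x1 * cnj (x $ x1) * wirtbar \<iota> pos_w2 (g pos_w2 0) x"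

definition flux_xbar :: "complex^'N \<Rightarrow> complex" where
  "flux_xbar x = g pos_w2 n x - cnj (x $ x1) * g pos_w2 pos_w2 x"

definition flux_y :: "complex^'N \<Rightarrow> complex" where
  "flux_y x = - wirtbar \<iota> 0 (g 0 n) x + cnj (x $ x1) * wirtbar \<iota> 0 (g 0 pos_w2) x
     + wirtbar \<iota> n (g 0 0) x - cnj (x $ x1) * wirtbar \<iota> pos_w2 (g 0 0) x"

definition flux_w :: "complex^'N \<Rightarrow> complex" where
  "flux_w x = - (x $ x1 * flux_y x)"

definition flux_ybar :: "complex^'N \<Rightarrow> complex" where
  "flux_ybar x = - g pos_w2 0 x"

definition flux_wbar :: "complex^'N \<Rightarrow> complex" where
  "flux_wbar x = - (cnj (x $ x1) * flux_ybar x)"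

definition ddbar_coeff :: "nat \<Rightarrow> nat \<Rightarrow> nat \<Rightarrow> nat \<Rightarrow> complex^'N \<Rightarrow> complex" where
  "ddbar_coeff e c f d x = wirt \<iota> e (wirtbar \<iota> f (g c d)) x - wirt \<iota> c (wirtbar \<iota> f (g e d)) x
      - wirt \<iota> e (wirtbar \<iota> d (g c f)) x + wirt \<iota> c (wirtbar \<iota> d (g e f)) x"

lemma ddbar_coeff_eq_0:
  "e < BR_N n \<Longrightarrow> c < BR_N n \<Longrightarrow> f < BR_N n \<Longrightarrow> d < BR_N n \<Longrightarrow> ddbar_coeff e c f d x = 0"
  using pluriclosed unfolding BR_pluriclosed_def ddbar_coeff_def by blast

(* The ddbar_coeff combination is ddbar omega on d/dx_1, d/dy_2 - x_1 d/dw_2 and their conjugates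
   (hence flux_w = - x_1 flux_y); g_{w_2 w_2} appears through the bracket of this frame. *)
lemma g_ww_eq_ddbar_coeffs_minus_divergence:
  "g pos_w2 pos_w2 x = ddbar_coeff 0 n 0 n x - cnj (x $ x1) * ddbar_coeff 0 n 0 pos_w2 x
     - x $ x1 * ddbar_coeff 0 pos_w2 0 n x + x $ x1 * cnj (x $ x1) * ddbar_coeff 0 pos_w2 0 pos_w2 x
     - (wirt \<iota> 0 flux_x x + wirtbar \<iota> 0 flux_xbar x + wirt \<iota> n flux_y x + wirt \<iota> pos_w2 flux_w x
        + wirtbar \<iota> n flux_ybar x + wirtbar \<iota> pos_w2 flux_wbar x)"
  using positions_less_BR_N x1_y2_w2_distinct
  unfolding flux_x_def[abs_def] flux_xbar_def[abs_def] flux_y_def[abs_def] flux_w_def[abs_def]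
    flux_ybar_def[abs_def] flux_wbar_def[abs_def] ddbar_coeff_def
  by (simp add: wirtinger_rules iota_positions) (simp add: algebra_simps)

lemma left_transl_x1: "left_transl a b c x $ x1 = x $ x1 + a"
  using x1_y2_w2_distinct by (simp add: left_transl_def lattice_elt_def axis_def)

lemma flux_x_left_transl:
  assumes "a \<in> gauss_ints" "b \<in> gauss_ints" "c \<in> gauss_ints"
  shows "flux_x (left_transl a b c x) = flux_x x"
  using positions_less_BR_N unfolding flux_x_def
  by (simp only: wirtbar_g_left_transl[OF assms, where x = x] left_transl_x1)
    (simp add: jac_pullback_eq, simp add: algebra_simps)

lemma flux_xbar_left_transl:
  assumes "a \<in> gauss_ints" "b \<in> gauss_ints" "c \<in> gauss_ints"
  shows "flux_xbar (left_transl a b c x) = flux_xbar x"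
  using positions_less_BR_N unfolding flux_xbar_def
  by (simp only: g_left_transl[OF assms, where x = x] left_transl_x1)
    (simp add: jac_pullback_eq, simp add: algebra_simps)

lemma flux_y_left_transl:
  assumes "b \<in> gauss_ints" "c \<in> gauss_ints"
  shows "flux_y (left_transl 0 b c x) = flux_y x"
  using positions_less_BR_N unfolding flux_y_def
  by (simp only: wirtbar_g_left_transl[OF gauss_ints_0 assms, where x = x] left_transl_x1)
    (simp add: jac_pullback_eq)

lemma flux_ybar_left_transl:
  assumes "b \<in> gauss_ints" "c \<in> gauss_ints"
  shows "flux_ybar (left_transl 0 b c x) = flux_ybar x"
  using positions_less_BR_N unfolding flux_ybar_def
  by (simp only: g_left_transl[OF gauss_ints_0 assms, where x = x]) (simp add: jac_pullback_eq)

lemma flux_w_left_transl: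
  "b \<in> gauss_ints \<Longrightarrow> c \<in> gauss_ints \<Longrightarrow> flux_w (left_transl 0 b c x) = flux_w x"
  by (simp add: flux_w_def flux_y_left_transl left_transl_x1)

lemma flux_wbar_left_transl:
  "b \<in> gauss_ints \<Longrightarrow> c \<in> gauss_ints \<Longrightarrow> flux_wbar (left_transl 0 b c x) = flux_wbar x"
  by (simp add: flux_wbar_def flux_ybar_left_transl left_transl_x1)

lemma C1_fluxes: "C1 flux_x" "C1 flux_xbar" "C1 flux_y" "C1 flux_w" "C1 flux_ybar" "C1 flux_wbar"
  unfolding flux_x_def[abs_def] flux_xbar_def[abs_def] flux_y_def[abs_def] flux_w_def[abs_def]
    flux_ybar_def[abs_def] flux_wbar_def[abs_def]
  using positions_less_BR_N
  by (intro C1_add C1_diff C1_mult C1_minus C1_wirtbar_g C1_g C1_vec_nth C1_cnj_vec_nth; simp)+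

lemma Re_g_diagonal_pos:
  assumes "c < BR_N n"
  shows "0 < Re (g c c x)"
proof -
  define \<xi> where "\<xi> d = (if d = c then 1 else 0 :: complex)" for d
  have pointwise: "g c' d x * \<xi> c' * cnj (\<xi> d) = (if c' = c then if d = c then g c' d x else 0 else 0)" for c' d
    by (simp add: \<xi>_def)
  have "(\<Sum>c'<BR_N n. \<Sum>d<BR_N n. g c' d x * \<xi> c' * cnj (\<xi> d))
      = (\<Sum>c'<BR_N n. if c' = c then \<Sum>d<BR_N n. if d = c then g c' d x else 0 else 0)"
    unfolding pointwise by (intro sum.cong refl) simp
  also have "\<dots> = g c c x"
    using assms by (simp add: sum.delta)
  finally have diagonal: "(\<Sum>c'<BR_N n. \<Sum>d<BR_N n. g c' d x * \<xi> c' * cnj (\<xi> d)) = g c c x" .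
  have "\<exists>d<BR_N n. \<xi> d \<noteq> 0" using assms by (auto simp: \<xi>_def)
  then have "0 < Re (\<Sum>c'<BR_N n. \<Sum>d<BR_N n. g c' d x * \<xi> c' * cnj (\<xi> d))"
    using hermitian unfolding BR_hermitian_metric_def by blast
  then show ?thesis unfolding diagonal .
qed

lemma has_integral_flux_derivatives:
  "((\<lambda>p. wirt \<iota> 0 flux_x (slice p)) has_integral 0) unit_cube6"
  "((\<lambda>p. wirtbar \<iota> 0 flux_xbar (slice p)) has_integral 0) unit_cube6"
  "((\<lambda>p. wirt \<iota> n flux_y (slice p)) has_integral 0) unit_cube6"
  "((\<lambda>p. wirt \<iota> pos_w2 flux_w (slice p)) has_integral 0) unit_cube6"
  "((\<lambda>p. wirtbar \<iota> n flux_ybar (slice p)) has_integral 0) unit_cube6"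
  "((\<lambda>p. wirtbar \<iota> pos_w2 flux_wbar (slice p)) has_integral 0) unit_cube6"
proof -
  note C1 = C1_fluxes and wirtinger_0 = has_integral_slice_wirtinger_0
  show "((\<lambda>p. wirt \<iota> 0 flux_x (slice p)) has_integral 0) unit_cube6"
    by (rule wirtinger_0(1)[OF C1(1) iota_positions(1)
        integral_slice_derivative_x1_re[OF C1(1)] integral_slice_derivative_x1_im[OF C1(1)]])
      (simp_all add: flux_x_left_transl)
  show "((\<lambda>p. wirtbar \<iota> 0 flux_xbar (slice p)) has_integral 0) unit_cube6"
    by (rule wirtinger_0(2)[OF C1(2) iota_positions(1)
        integral_slice_derivative_x1_re[OF C1(2)] integral_slice_derivative_x1_im[OF C1(2)]])
      (simp_all add: flux_xbar_left_transl)
  show "((\<lambda>p. wirt \<iota> n flux_y (slice p)) has_integral 0) unit_cube6"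
    by (rule wirtinger_0(1)[OF C1(3) iota_positions(2)
        integral_slice_derivative_y2_re[OF C1(3)] integral_slice_derivative_y2_im[OF C1(3)]])
      (simp_all add: flux_y_left_transl)
  show "((\<lambda>p. wirt \<iota> pos_w2 flux_w (slice p)) has_integral 0) unit_cube6"
    by (rule wirtinger_0(1)[OF C1(4) iota_positions(3)
        integral_slice_derivative_w2_re[OF C1(4)] integral_slice_derivative_w2_im[OF C1(4)]])
      (simp_all add: flux_w_left_transl)
  show "((\<lambda>p. wirtbar \<iota> n flux_ybar (slice p)) has_integral 0) unit_cube6"
    by (rule wirtinger_0(2)[OF C1(5) iota_positions(2)
        integral_slice_derivative_y2_re[OF C1(5)] integral_slice_derivative_y2_im[OF C1(5)]])
      (simp_all add: flux_ybar_left_transl)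
  show "((\<lambda>p. wirtbar \<iota> pos_w2 flux_wbar (slice p)) has_integral 0) unit_cube6"
    by (rule wirtinger_0(2)[OF C1(6) iota_positions(3)
        integral_slice_derivative_w2_re[OF C1(6)] integral_slice_derivative_w2_im[OF C1(6)]])
      (simp_all add: flux_wbar_left_transl)
qed

lemma has_integral_g_ww_slice: "((\<lambda>p. g pos_w2 pos_w2 (slice p)) has_integral 0) unit_cube6"
proof -
  note I = has_integral_flux_derivatives
  have "((\<lambda>p. - (wirt \<iota> 0 flux_x (slice p) + wirtbar \<iota> 0 flux_xbar (slice p)
      + wirt \<iota> n flux_y (slice p) + wirt \<iota> pos_w2 flux_w (slice p)
      + wirtbar \<iota> n flux_ybar (slice p) + wirtbar \<iota> pos_w2 flux_wbar (slice p))) has_integral 0) unit_cube6"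
    using has_integral_neg[OF has_integral_add[OF has_integral_add[OF has_integral_add[OF
      has_integral_add[OF has_integral_add[OF I(1,2)] I(3)] I(4)] I(5)] I(6)]] by simp
  then show ?thesis
    using positions_less_BR_N
    by (simp add: g_ww_eq_ddbar_coeffs_minus_divergence ddbar_coeff_eq_0)
qed

lemma contradiction: False
proof -
  have "continuous_on unit_cube6 (\<lambda>p. g pos_w2 pos_w2 (slice p))"
    using continuous_on_C1_slice(1)[OF C1_g] positions_less_BR_N continuous_on_subset by blast
  then have "0 < Re (integral unit_cube6 (\<lambda>p. g pos_w2 pos_w2 (slice p)))"
    using positions_less_BR_N by (intro Re_integral_pos Re_g_diagonal_pos) (simp_all add: content_Pair)
  then show False
    using has_integral_g_ww_slice by (simp add: integral_unique)
qed

end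

theorem proposition3p5:
  fixes n :: nat and \<iota> :: "nat \<Rightarrow> 'N::finite"
  assumes "2 \<le> n" and "bij_betw \<iota> {..<BR_N n} (UNIV :: 'N set)"
  shows "\<not> (\<exists>g. BR_SKT_metric n \<iota> g)"
proof
  assume "\<exists>g. BR_SKT_metric n \<iota> g"
  then obtain g where "BR_SKT_metric n \<iota> g" by blast
  then interpret BR_SKT n \<iota> g
    using assms by unfold_locales
  show False by (rule contradiction)
qed

end
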